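(* Let $\mathfrak{k}$ be a field, $n\ge2$, $r_1,\dots,r_n$ positive integers, and ${\mathcal A}=(x_{i_1\ldots i_n})_{1\le i_j\le r_j}$ a box-shaped matrix of distinct indeterminates with polynomial ring $\mathfrak{k}[{\mathcal A}]$. For $l=1,\dots,n$ let $I_l=I_2({\mathcal A}_l)\mathfrak{k}[{\mathcal A}]+(x_{i_1\ldots i_n}: i_l=r_l)$, where ${\mathcal A}_l$ is the sub-box-shaped matrix of entries with $i_l<r_l$. Then $\bigcap_{l=1}^n I_l=I_2({\mathcal A})+(x_{r_1\ldots r_n})$.
   Context: $\mathfrak{k}$ is algebraically closed of characteristic $0$. The $2\times2$ minors of a box-shaped matrix $(a_{i_1\ldots i_n})$ are the elements $a_{i_1\ldots i_l\ldots i_n}a_{j_1\ldots j_l\ldots j_n}-a_{i_1\ldots i_{l-1}j_li_{l+1}\ldots i_n}a_{j_1\ldots j_{l-1}i_lj_{l+1}\ldots j_n}$ for any coordinate $l$ and any two index points; $I_2(\cdot)$ denotes the ideal they generate. *)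

theory Defs
  imports "HOL-Library.Poly_Mapping"
begin

text \<open>Polynomials in indeterminates indexed by index points (lists of naturals):
  the polynomial ring is (nat list \<Rightarrow>0 nat) \<Rightarrow>0 'k (monomials \<Rightarrow> coefficients).\<close>

type_synonym 'k mpoly = "(nat list \<Rightarrow>\<^sub>0 nat) \<Rightarrow>\<^sub>0 'k"

definition Var :: "nat list \<Rightarrow> 'k::comm_ring_1 mpoly" where
  "Var p = Poly_Mapping.single (Poly_Mapping.single p 1) 1"

definition ideal_gen :: "'a::comm_ring_1 set \<Rightarrow> 'a set" where
  "ideal_gen S = {x. \<exists>F c. finite F \<and> F \<subseteq> S \<and> x = (\<Sum>s\<in>F. c s * s)}"

text \<open>Index points of the box with sizes r (coordinates 0..length r - 1, entries 1..r!j).\<close>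
definition box :: "nat list \<Rightarrow> nat list set" where
  "box r = {p. length p = length r \<and> (\<forall>j<length r. 1 \<le> p ! j \<and> p ! j \<le> r ! j)}"

definition minors2 :: "nat list set \<Rightarrow> 'k::comm_ring_1 mpoly set" where
  "minors2 P = {Var p * Var q - Var (p[l := q ! l]) * Var (q[l := p ! l]) | p q l.
                  p \<in> P \<and> q \<in> P \<and> l < length p}"

definition I2 :: "nat list set \<Rightarrow> 'k::comm_ring_1 mpoly set" where
  "I2 P = ideal_gen (minors2 P)"

definition subbox :: "nat list \<Rightarrow> nat \<Rightarrow> nat list set" where
  "subbox r l = {p \<in> box r. p ! l < r ! l}"

definition I_l :: "nat list \<Rightarrow> nat \<Rightarrow> 'k::comm_ring_1 mpoly set" where
  "I_l r l = ideal_gen (minors2 (subbox r l) \<union> {Var p | p. p \<in> box r \<and> p ! l = r ! l})"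

end

theory Submission
  imports Defs "HOL.Modules"
begin

(* The 2x2 minors are homogeneous for the Segre multidegree of a monomial: for every coordinate l
   and value j, the number of its variables with i_l = j (variables outside the box are graded
   individually). Conversely, two monomials of the same multidegree are joined by exchanges of one
   coordinate between two of their variables, so they are congruent modulo I_2(A). Hence, modulo
   I_2(A), the homogeneous part of f of degree g is c x^mu for any monomial mu of degree g, where
   c is its coefficient sum.
   The coefficient sum in degree g kills every minor, and also every multiple of a variable with
   i_l = r_l if no monomial of degree g contains such a variable. So for f in I_l, c <> 0 forces
   the slice i_l = r_l to occur in degree g; for f in all the I_l, exchanges then produce a
   monomial mu of degree g divisible by x_{r_1...r_n}.
   The argument works over any commutative ring and uses only n >= 1. *)


interpretation ring_mult: module "(*) :: 'a::comm_ring_1 \<Rightarrow> 'a \<Rightarrow> 'a"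
  by unfold_locales (simp_all add: algebra_simps)

lemma ideal_gen_eq_span: "ideal_gen S = ring_mult.span S"
  by (auto simp: ideal_gen_def ring_mult.span_explicit)

lemmas ideal_gen_base = ring_mult.span_base[folded ideal_gen_eq_span]
lemmas ideal_gen_zero = ring_mult.span_zero[folded ideal_gen_eq_span]
lemmas ideal_gen_add = ring_mult.span_add[folded ideal_gen_eq_span]
lemmas ideal_gen_diff = ring_mult.span_diff[folded ideal_gen_eq_span]
lemmas ideal_gen_mult = ring_mult.span_scale[folded ideal_gen_eq_span]
lemmas ideal_gen_sum = ring_mult.span_sum[folded ideal_gen_eq_span]
lemmas ideal_gen_mono = ring_mult.span_mono[folded ideal_gen_eq_span]

lemma ideal_gen_subset: "S \<subseteq> ideal_gen T \<Longrightarrow> ideal_gen S \<subseteq> ideal_gen T"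
  unfolding ideal_gen_eq_span by (rule ring_mult.span_minimal) simp_all

lemma ideal_gen_diff_trans:
  "a - b \<in> ideal_gen S \<Longrightarrow> b - c \<in> ideal_gen S \<Longrightarrow> a - c \<in> ideal_gen S"
  using ideal_gen_add[of "a - b" S "b - c"] by simp


lemma lookup_pos_obtains_add_single:
  fixes m :: "'a \<Rightarrow>\<^sub>0 nat"
  assumes "0 < Poly_Mapping.lookup m p"
  obtains m0 where "m = m0 + Poly_Mapping.single p 1"
proof
  show "m = (m - Poly_Mapping.single p 1) + Poly_Mapping.single p 1"
    using assms by (intro poly_mapping_eqI) (auto simp: lookup_add lookup_minus lookup_single when_def)
qed

lemma lookup_pos_obtains_add_two_single:
  fixes m :: "'a \<Rightarrow>\<^sub>0 nat"
  assumes "0 < Poly_Mapping.lookup m p" "0 < Poly_Mapping.lookup m q" "p \<noteq> q"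
  obtains m0 where "m = m0 + Poly_Mapping.single p 1 + Poly_Mapping.single q 1"
proof
  show "m = (m - Poly_Mapping.single p 1 - Poly_Mapping.single q 1)
          + Poly_Mapping.single p 1 + Poly_Mapping.single q 1"
    using assms by (intro poly_mapping_eqI) (auto simp: lookup_add lookup_minus lookup_single when_def)
qed

lemma poly_mapping_eq_sum_single:
  "f = (\<Sum>m\<in>Poly_Mapping.keys f. Poly_Mapping.single m (Poly_Mapping.lookup f m))"
  by (rule poly_mapping_eqI) (simp add: lookup_sum lookup_single when_def in_keys_iff)

lemma single_sum: "Poly_Mapping.single k (sum g A) = (\<Sum>x\<in>A. Poly_Mapping.single k (g x))"
  by (induction A rule: infinite_finite_induct) (auto simp: single_add)

definition Mon :: "(nat list \<Rightarrow>\<^sub>0 nat) \<Rightarrow> 'k::comm_ring_1 mpoly" where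
  "Mon m = Poly_Mapping.single m 1"

lemma Mon_add: "Mon (a + b) = (Mon a * Mon b :: 'k::comm_ring_1 mpoly)"
  by (simp add: Mon_def mult_single)

lemma Var_eq_Mon: "Var p = Mon (Poly_Mapping.single p 1)"
  by (simp add: Var_def Mon_def)

lemma finite_box: "finite (box r)"
proof (rule finite_subset)
  show "box r \<subseteq> {p. set p \<subseteq> {..sum_list r} \<and> length p = length r}"
    by (auto simp: box_def in_set_conv_nth) (metis elem_le_sum_list le_trans)
qed (rule finite_lists_length_eq, simp)

lemma list_update_in_box: "p \<in> box r \<Longrightarrow> q \<in> box r \<Longrightarrow> p[k := q ! k] \<in> box r"
  by (cases "k < length r") (auto simp: box_def nth_list_update)

lemma minor_in_minors2:
  "p \<in> P \<Longrightarrow> q \<in> P \<Longrightarrow> k < length p \<Longrightarrow>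
    Var p * Var q - Var (p[k := q ! k]) * Var (q[k := p ! k]) \<in> minors2 P"
  unfolding minors2_def by (intro CollectI exI[of _ p] exI[of _ q] exI[of _ k]) simp

lemma minors2_mono: "P \<subseteq> Q \<Longrightarrow> minors2 P \<subseteq> minors2 Q"
  unfolding minors2_def by blast

lemma minor_eq_Mon_diff:
  "Var p * Var q - Var p' * Var q' = (Mon (Poly_Mapping.single p 1 + Poly_Mapping.single q 1)
     - Mon (Poly_Mapping.single p' 1 + Poly_Mapping.single q' 1) :: 'k::comm_ring_1 mpoly)"
  by (simp add: Var_eq_Mon Mon_add)


section \<open>The Segre multidegree\<close>

definition slice_deg :: "nat list \<Rightarrow> nat \<Rightarrow> nat \<Rightarrow> (nat list \<Rightarrow>\<^sub>0 nat) \<Rightarrow> nat" where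
  "slice_deg r l j m = (\<Sum>p | p \<in> box r \<and> p ! l = j. Poly_Mapping.lookup m p)"

type_synonym multidegree = "(nat list \<Rightarrow> nat) \<times> (nat \<Rightarrow> nat \<Rightarrow> nat)"

definition multideg :: "nat list \<Rightarrow> (nat list \<Rightarrow>\<^sub>0 nat) \<Rightarrow> multidegree" where
  "multideg r m = ((\<lambda>p. if p \<in> box r then 0 else Poly_Mapping.lookup m p), (\<lambda>l j. slice_deg r l j m))"

lemma slice_deg_add: "slice_deg r l j (a + b) = slice_deg r l j a + slice_deg r l j b"
  by (simp add: slice_deg_def lookup_add sum.distrib)

lemma slice_deg_single:
  "slice_deg r l j (Poly_Mapping.single p 1) = (if p \<in> box r \<and> p ! l = j then 1 else 0)"
  using finite_box by (simp add: slice_deg_def lookup_single when_def sum.delta)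

lemma lookup_le_slice_deg: "p \<in> box r \<Longrightarrow> Poly_Mapping.lookup m p \<le> slice_deg r l (p ! l) m"
  unfolding slice_deg_def by (rule member_le_sum) (use finite_box in auto)

lemma slice_deg_gt_0_iff:
  "0 < slice_deg r l j m \<longleftrightarrow> (\<exists>p\<in>box r. p ! l = j \<and> 0 < Poly_Mapping.lookup m p)"
proof -
  have fin: "finite {p. p \<in> box r \<and> p ! l = j}" using finite_box by simp
  then show ?thesis unfolding slice_deg_def neq0_conv[symmetric] sum_eq_0_iff[OF fin] by auto
qed

lemma multideg_eq_iff:
  "multideg r m = multideg r m' \<longleftrightarrow>
     (\<forall>p. p \<notin> box r \<longrightarrow> Poly_Mapping.lookup m p = Poly_Mapping.lookup m' p)
     \<and> (\<forall>l j. slice_deg r l j m = slice_deg r l j m')"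
  by (auto simp: multideg_def fun_eq_iff)

lemma multideg_add_left_cancel:
  "multideg r (c + a) = multideg r (c + b) \<longleftrightarrow> multideg r a = multideg r b"
  by (auto simp: multideg_def slice_deg_add lookup_add fun_eq_iff)

lemma multideg_swap:
  assumes "p \<in> box r" "q \<in> box r" "k < length r"
  shows "multideg r (Poly_Mapping.single p 1 + Poly_Mapping.single q 1)
       = multideg r (Poly_Mapping.single (p[k := q ! k]) 1 + Poly_Mapping.single (q[k := p ! k]) 1)"
proof -
  have "k < length p" "k < length q" using assms by (auto simp: box_def)
  then show ?thesis
    using assms list_update_in_box[of p r q k] list_update_in_box[of q r p k]
    by (auto simp: multideg_eq_iff lookup_add lookup_single when_def slice_deg_add
        slice_deg_single nth_list_update simp del: One_nat_def)
qed


section \<open>Connectedness of the multidegree fibres\<close>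

lemma exchange_Mon_diff_in_I2:
  assumes "p \<in> box r" "q \<in> box r" "k < length r" "p \<noteq> q"
    and "0 < Poly_Mapping.lookup m p" "0 < Poly_Mapping.lookup m q"
  obtains m' where "multideg r m' = multideg r m" "0 < Poly_Mapping.lookup m' (p[k := q ! k])"
    "(Mon m - Mon m' :: 'k::comm_ring_1 mpoly) \<in> I2 (box r)"
proof -
  obtain m0 where m: "m = m0 + Poly_Mapping.single p 1 + Poly_Mapping.single q 1"
    using assms(5,6,4) by (rule lookup_pos_obtains_add_two_single)
  define m' where
    "m' = m0 + Poly_Mapping.single (p[k := q ! k]) 1 + Poly_Mapping.single (q[k := p ! k]) 1"
  let ?minor = "Var p * Var q - Var (p[k := q ! k]) * Var (q[k := p ! k]) :: 'k mpoly"
  have "multideg r m' = multideg r m"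
    unfolding m m'_def add.assoc multideg_add_left_cancel using multideg_swap[OF assms(1-3)] ..
  moreover have "0 < Poly_Mapping.lookup m' (p[k := q ! k])"
    by (simp add: m'_def lookup_add)
  moreover have "Mon m - Mon m' \<in> (I2 (box r) :: 'k mpoly set)"
  proof -
    have "?minor \<in> minors2 (box r)"
      using assms(1-3) by (intro minor_in_minors2) (auto simp: box_def)
    then have "Mon m0 * ?minor \<in> I2 (box r)"
      unfolding I2_def by (intro ideal_gen_mult ideal_gen_base)
    moreover have "Mon m - Mon m' = Mon m0 * ?minor"
      unfolding m m'_def Mon_add Var_eq_Mon[symmetric] by (simp only: right_diff_distrib mult.assoc)
    ultimately show ?thesis by simp
  qed
  ultimately show thesis by (rule that)
qed

lemma same_multideg_update_var:
  assumes q: "q \<in> box r" "0 < Poly_Mapping.lookup m q"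
    and k: "k < length r" "0 < slice_deg r k j m"
  obtains m' where "multideg r m' = multideg r m" "q[k := j] \<in> box r"
    "0 < Poly_Mapping.lookup m' (q[k := j])" "(Mon m - Mon m' :: 'k::comm_ring_1 mpoly) \<in> I2 (box r)"
proof -
  obtain q' where q': "q' \<in> box r" "q' ! k = j" "0 < Poly_Mapping.lookup m q'"
    using k(2) by (auto simp: slice_deg_gt_0_iff)
  then have box: "q[k := j] \<in> box r"
    using list_update_in_box[OF q(1) q'(1), of k] by simp
  show thesis
  proof (cases "q ! k = j")
    case True
    then have "q[k := j] = q" by auto
    then show thesis
      using that[of m] q unfolding I2_def by (simp add: ideal_gen_zero)
  next
    case False
    then show thesis
      using exchange_Mon_diff_in_I2[OF q(1) q'(1) k(1) _ q(2) q'(3)] that box q'(2) by metis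
  qed
qed

lemma same_multideg_divisible_by_Var:
  assumes p: "p \<in> box r" and pos: "\<forall>l<length r. 0 < slice_deg r l (p ! l) m" and r: "0 < length r"
  obtains m' where "multideg r m' = multideg r m" "0 < Poly_Mapping.lookup m' p"
    "(Mon m - Mon m' :: 'k::comm_ring_1 mpoly) \<in> I2 (box r)"
proof -
  \<comment> \<open>Move one variable of the monomial towards x_p, one coordinate at a time.\<close>
  have "\<exists>m' q. multideg r m' = multideg r m \<and> (Mon m - Mon m' :: 'k mpoly) \<in> I2 (box r)
          \<and> q \<in> box r \<and> 0 < Poly_Mapping.lookup m' q \<and> take k q = take k p"
    if "k \<le> length r" for k
    using that
  proof (induction k)
    case 0
    obtain q where "q \<in> box r" "0 < Poly_Mapping.lookup m q"
      using pos r by (auto simp: slice_deg_gt_0_iff)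
    then show ?case
      unfolding I2_def by (intro exI[of _ m] exI[of _ q]) (simp add: ideal_gen_zero)
  next
    case (Suc k)
    then obtain m' q where m': "multideg r m' = multideg r m" "(Mon m - Mon m' :: 'k mpoly) \<in> I2 (box r)"
      and q: "q \<in> box r" "0 < Poly_Mapping.lookup m' q" "take k q = take k p"
      by auto
    have k: "k < length r" "0 < slice_deg r k (p ! k) m'"
      using Suc.prems pos m'(1) by (auto simp: multideg_eq_iff)
    obtain m'' where m'': "multideg r m'' = multideg r m'" "q[k := p ! k] \<in> box r"
      "0 < Poly_Mapping.lookup m'' (q[k := p ! k])" "(Mon m' - Mon m'' :: 'k mpoly) \<in> I2 (box r)"
      using same_multideg_update_var[OF q(1,2) k] .
    have "(Mon m - Mon m'' :: 'k mpoly) \<in> I2 (box r)"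
      using m'(2) m''(4) unfolding I2_def by (rule ideal_gen_diff_trans)
    moreover have "take (Suc k) (q[k := p ! k]) = take (Suc k) p"
      using q(1,3) p k(1) by (simp add: take_Suc_conv_app_nth box_def)
    ultimately show ?case
      using m'(1) m''(1-3) by metis
  qed
  then obtain m' q where "multideg r m' = multideg r m" "(Mon m - Mon m' :: 'k mpoly) \<in> I2 (box r)"
    "q \<in> box r" "0 < Poly_Mapping.lookup m' q" "take (length r) q = take (length r) p"
    by blast
  moreover from this(3,5) p have "q = p" by (simp add: box_def)
  ultimately show thesis using that by blast
qed

lemma same_multideg_Mon_diff_in_I2:
  assumes "0 < length r" "multideg r m = multideg r m'"
  shows "(Mon m - Mon m' :: 'k::comm_ring_1 mpoly) \<in> I2 (box r)"
  using assms(2)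
proof (induction "sum (Poly_Mapping.lookup m) (box r)" arbitrary: m m' rule: less_induct)
  case less
  show ?case
  proof (cases "\<exists>p\<in>box r. 0 < Poly_Mapping.lookup m p")
    case False
    have m'_box: "Poly_Mapping.lookup m' p = 0" if "p \<in> box r" for p
    proof -
      have "Poly_Mapping.lookup m' p \<le> slice_deg r 0 (p ! 0) m'"
        by (rule lookup_le_slice_deg[OF that])
      also have "\<dots> = slice_deg r 0 (p ! 0) m"
        using less.prems by (simp add: multideg_eq_iff)
      also have "\<dots> = 0"
        using False slice_deg_gt_0_iff[of r 0 "p ! 0" m] by auto
      finally show ?thesis by simp
    qed
    have "m = m'"
    proof (rule poly_mapping_eqI)
      fix p
      show "Poly_Mapping.lookup m p = Poly_Mapping.lookup m' p"
        using False m'_box less.prems by (cases "p \<in> box r") (auto simp: multideg_eq_iff)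
    qed
    then show ?thesis unfolding I2_def by (simp add: ideal_gen_zero)
  next
    case True
    then obtain p where p: "p \<in> box r" "0 < Poly_Mapping.lookup m p" by blast
    have "\<forall>l<length r. 0 < slice_deg r l (p ! l) m'"
      using less.prems lookup_le_slice_deg[OF p(1), of m] p(2)
      by (auto simp: multideg_eq_iff intro: order.strict_trans2)
    then obtain m'' where m'': "multideg r m'' = multideg r m'" "0 < Poly_Mapping.lookup m'' p"
      "(Mon m' - Mon m'' :: 'k mpoly) \<in> I2 (box r)"
      using same_multideg_divisible_by_Var[OF p(1) _ assms(1)] by blast
    obtain a b where a: "m = a + Poly_Mapping.single p 1" and b: "m'' = b + Poly_Mapping.single p 1"
      using lookup_pos_obtains_add_single p(2) m''(2) by metis
    have "multideg r a = multideg r b"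
      using less.prems m''(1) multideg_add_left_cancel[of r "Poly_Mapping.single p 1" a b]
      by (simp add: a b add.commute)
    moreover have "sum (Poly_Mapping.lookup a) (box r) < sum (Poly_Mapping.lookup m) (box r)"
      using p finite_box by (simp add: a lookup_add sum.distrib lookup_single when_def)
    ultimately have "(Mon a - Mon b :: 'k mpoly) \<in> I2 (box r)"
      using less.hyps by blast
    then have "(Var p * (Mon a - Mon b) :: 'k mpoly) \<in> I2 (box r)"
      unfolding I2_def by (rule ideal_gen_mult)
    moreover have "Var p * (Mon a - Mon b) = (Mon m - Mon m'' :: 'k mpoly)"
      unfolding a b Mon_add Var_eq_Mon by (simp only: right_diff_distrib mult.commute)
    ultimately have "(Mon m - Mon m'' :: 'k mpoly) \<in> I2 (box r)"
      by simp
    then show ?thesis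
      using ideal_gen_diff[OF _ m''(3)[unfolded I2_def], of "Mon m - Mon m''"] unfolding I2_def by simp
  qed
qed


section \<open>Homogeneous parts and coefficient sums\<close>

definition homogeneous_part :: "nat list \<Rightarrow> multidegree \<Rightarrow> 'k::comm_ring_1 mpoly \<Rightarrow> 'k mpoly" where
  "homogeneous_part r \<gamma> f =
     (\<Sum>m\<in>Poly_Mapping.keys f. Poly_Mapping.single m (Poly_Mapping.lookup f m) when multideg r m = \<gamma>)"

definition coeff_sum :: "nat list \<Rightarrow> multidegree \<Rightarrow> 'k::comm_ring_1 mpoly \<Rightarrow> 'k" where
  "coeff_sum r \<gamma> f = (\<Sum>m\<in>Poly_Mapping.keys f. Poly_Mapping.lookup f m when multideg r m = \<gamma>)"

interpretation coeff_sum: additive "coeff_sum r \<gamma>" for r \<gamma>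
  by unfold_locales
    (unfold coeff_sum_def, rule setsum_keys_plus_distrib, simp_all add: when_add_distrib)

lemma coeff_sum_single: "coeff_sum r \<gamma> (Poly_Mapping.single m c) = (c when multideg r m = \<gamma>)"
  by (simp add: coeff_sum_def)

lemma sum_homogeneous_parts:
  "f = (\<Sum>\<gamma>\<in>multideg r ` Poly_Mapping.keys f. homogeneous_part r \<gamma> f)"
proof -
  have "f = (\<Sum>m\<in>Poly_Mapping.keys f. Poly_Mapping.single m (Poly_Mapping.lookup f m))"
    by (rule poly_mapping_eq_sum_single)
  also have "\<dots> = (\<Sum>\<gamma>\<in>multideg r ` Poly_Mapping.keys f.
      \<Sum>m\<in>{m \<in> Poly_Mapping.keys f. multideg r m = \<gamma>}. Poly_Mapping.single m (Poly_Mapping.lookup f m))"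
    by (rule sum.image_gen) simp
  also have "\<dots> = (\<Sum>\<gamma>\<in>multideg r ` Poly_Mapping.keys f. homogeneous_part r \<gamma> f)"
    unfolding homogeneous_part_def when_def by (simp add: sum.inter_filter)
  finally show ?thesis .
qed

lemma homogeneous_part_mod_I2:
  assumes "0 < length r"
  shows "homogeneous_part r (multideg r \<mu>) f - Poly_Mapping.single \<mu> (coeff_sum r (multideg r \<mu>) f)
    \<in> I2 (box r)"
proof -
  have "homogeneous_part r (multideg r \<mu>) f - Poly_Mapping.single \<mu> (coeff_sum r (multideg r \<mu>) f)
      = (\<Sum>m\<in>Poly_Mapping.keys f. Poly_Mapping.single 0 (Poly_Mapping.lookup f m) * (Mon m - Mon \<mu>)
           when multideg r m = multideg r \<mu>)"
    unfolding homogeneous_part_def coeff_sum_def single_sum sum_subtractf[symmetric]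
    by (intro sum.cong) (auto simp: when_def Mon_def mult_single right_diff_distrib)
  also have "\<dots> \<in> I2 (box r)"
    unfolding I2_def using same_multideg_Mon_diff_in_I2[OF assms]
    by (intro ideal_gen_sum) (auto simp: I2_def when_def ideal_gen_zero intro: ideal_gen_mult)
  finally show ?thesis .
qed

lemma coeff_sum_mult_Mon_cong:
  assumes "multideg r a = multideg r b"
  shows "coeff_sum r \<gamma> (c * Mon a) = coeff_sum r \<gamma> (c * Mon b)"
proof -
  have "coeff_sum r \<gamma> (c * Mon e)
      = (\<Sum>k\<in>Poly_Mapping.keys c. Poly_Mapping.lookup c k when multideg r (k + e) = \<gamma>)" for e
  proof -
    have "c * Mon e = (\<Sum>k\<in>Poly_Mapping.keys c. Poly_Mapping.single (k + e) (Poly_Mapping.lookup c k))"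
      by (subst poly_mapping_eq_sum_single[of c]) (simp add: sum_distrib_right Mon_def mult_single)
    then show ?thesis by (simp add: coeff_sum.sum coeff_sum_single)
  qed
  moreover have "multideg r (k + a) = multideg r (k + b)" for k
    using assms multideg_add_left_cancel by blast
  ultimately show ?thesis by simp
qed

lemma coeff_sum_mult_minor_eq_0:
  assumes "s \<in> minors2 (box r)"
  shows "coeff_sum r \<gamma> (c * s) = 0"
proof -
  obtain p q k where "p \<in> box r" "q \<in> box r" "k < length p"
    and s: "s = Var p * Var q - Var (p[k := q ! k]) * Var (q[k := p ! k])"
    using assms unfolding minors2_def by blast
  then have "multideg r (Poly_Mapping.single p 1 + Poly_Mapping.single q 1)
       = multideg r (Poly_Mapping.single (p[k := q ! k]) 1 + Poly_Mapping.single (q[k := p ! k]) 1)"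
    by (intro multideg_swap) (auto simp: box_def)
  then show ?thesis
    unfolding s minor_eq_Mon_diff right_diff_distrib coeff_sum.diff
    by (rule coeff_sum_mult_Mon_cong[THEN eq_iff_diff_eq_0[THEN iffD1]])
qed

lemma coeff_sum_ideal_gen_eq_0:
  assumes "\<And>s c. s \<in> S \<Longrightarrow> coeff_sum r \<gamma> (c * s) = 0" and "f \<in> ideal_gen S"
  shows "coeff_sum r \<gamma> f = 0"
proof -
  obtain F c where "finite F" "F \<subseteq> S" "f = (\<Sum>s\<in>F. c s * s)"
    using assms(2) unfolding ideal_gen_def by blast
  then show ?thesis using assms(1) by (auto simp: coeff_sum.sum intro: sum.neutral)
qed

lemma slice_deg_gt_0_if_coeff_sum_I_l:
  fixes f :: "'k::comm_ring_1 mpoly"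
  assumes "f \<in> I_l r l" "coeff_sum r (multideg r m) f \<noteq> 0"
  shows "0 < slice_deg r l (r ! l) m"
proof (rule ccontr)
  assume "\<not> 0 < slice_deg r l (r ! l) m"
  then have m: "slice_deg r l (r ! l) m = 0" by simp
  have "coeff_sum r (multideg r m) (c * Var p) = 0"
    if p: "p \<in> box r" "p ! l = r ! l" for c :: "'k mpoly" and p
  proof -
    have "multideg r m' \<noteq> multideg r m" if m': "m' \<in> Poly_Mapping.keys (c * Var p)" for m'
    proof -
      have "Poly_Mapping.keys (Var p :: 'k mpoly) \<subseteq> {Poly_Mapping.single p 1}"
        by (simp add: Var_def)
      then obtain k where "m' = k + Poly_Mapping.single p 1"
        using m' keys_mult[of c "Var p"] by blast
      then have "slice_deg r l (r ! l) m' \<noteq> 0"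
        using p by (simp add: slice_deg_add slice_deg_single del: One_nat_def)
      then show ?thesis using m by (auto simp: multideg_eq_iff)
    qed
    then show ?thesis by (simp add: coeff_sum_def)
  qed
  moreover have "minors2 (subbox r l) \<subseteq> minors2 (box r)"
    by (rule minors2_mono) (auto simp: subbox_def)
  ultimately have "coeff_sum r (multideg r m) f = 0"
    using assms(1) unfolding I_l_def
    by (rule_tac coeff_sum_ideal_gen_eq_0) (auto intro: coeff_sum_mult_minor_eq_0)
  with assms(2) show False ..
qed


lemma ideal_gen_subset_I_l:
  assumes r: "r \<in> box r" and l: "l < length r"
  shows "ideal_gen (minors2 (box r) \<union> {Var r}) \<subseteq> (I_l r l :: 'k::comm_ring_1 mpoly set)"
proof -
  have Var: "Var p \<in> (I_l r l :: 'k mpoly set)" if "p \<in> box r" "p ! l = r ! l" for p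
    unfolding I_l_def using that by (intro ideal_gen_base) blast
  have Var_mult: "Var a * Var b \<in> (I_l r l :: 'k mpoly set)"
    if "a \<in> box r" "b \<in> box r" "a ! l = r ! l \<or> b ! l = r ! l" for a b
    using that Var[of a] Var[of b] ideal_gen_mult[of "Var a" _ "Var b"] ideal_gen_mult[of "Var b" _ "Var a"]
    unfolding I_l_def by (auto simp: mult.commute)
  have "s \<in> I_l r l" if minor: "s \<in> minors2 (box r)" for s :: "'k mpoly"
  proof -
    obtain p q k where pq: "p \<in> box r" "q \<in> box r" "k < length p"
      and s: "s = Var p * Var q - Var (p[k := q ! k]) * Var (q[k := p ! k])"
      using minor unfolding minors2_def by blast
    have len: "length p = length r" "length q = length r"
      using pq by (auto simp: box_def)
    show ?thesis
    proof (cases "p ! l = r ! l \<or> q ! l = r ! l")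
      case True
      then have "p[k := q ! k] ! l = r ! l \<or> q[k := p ! k] ! l = r ! l"
        using l len by (cases "k = l") (auto simp: nth_list_update)
      then show ?thesis
        using True pq list_update_in_box[of p r q k] list_update_in_box[of q r p k]
        unfolding s I_l_def by (intro ideal_gen_diff Var_mult[unfolded I_l_def])
    next
      case False
      then have "p \<in> subbox r l" "q \<in> subbox r l"
        using pq l by (auto simp: subbox_def box_def le_neq_implies_less)
      then have "s \<in> minors2 (subbox r l)"
        unfolding s using pq(3) by (rule minor_in_minors2)
      then show ?thesis unfolding I_l_def by (intro ideal_gen_base) blast
    qed
  qed
  then have "minors2 (box r) \<union> {Var r} \<subseteq> (I_l r l :: 'k mpoly set)"
    using Var[OF r refl] by blast
  then show ?thesis unfolding I_l_def by (rule ideal_gen_subset)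
qed

lemma homogeneous_part_in_ideal:
  fixes f :: "'k::comm_ring_1 mpoly"
  assumes r: "0 < length r" "r \<in> box r" and f: "\<forall>l<length r. f \<in> I_l r l"
  shows "homogeneous_part r (multideg r m) f \<in> ideal_gen (minors2 (box r) \<union> {Var r})"
proof -
  let ?J = "ideal_gen (minors2 (box r) \<union> {Var r}) :: 'k mpoly set"
  let ?c = "coeff_sum r (multideg r m) f"
  have I2_J: "I2 (box r) \<subseteq> ?J"
    unfolding I2_def by (rule ideal_gen_mono) blast
  show ?thesis
  proof (cases "?c = 0")
    case True
    then show ?thesis
      using homogeneous_part_mod_I2[OF r(1), of m f] I2_J by auto
  next
    case False
    then have "\<forall>l<length r. 0 < slice_deg r l (r ! l) m"
      using f slice_deg_gt_0_if_coeff_sum_I_l by blast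
    then obtain \<mu> where \<mu>: "multideg r \<mu> = multideg r m" "0 < Poly_Mapping.lookup \<mu> r"
      using same_multideg_divisible_by_Var[OF r(2) _ r(1)] by metis
    obtain \<mu>' where "\<mu> = \<mu>' + Poly_Mapping.single r 1"
      using \<mu>(2) by (rule lookup_pos_obtains_add_single)
    then have "Poly_Mapping.single \<mu> ?c = Poly_Mapping.single \<mu>' ?c * Var r"
      by (simp add: Var_def mult_single)
    also have "\<dots> \<in> ?J"
      by (intro ideal_gen_mult ideal_gen_base) simp
    finally have "Poly_Mapping.single \<mu> ?c \<in> ?J" .
    moreover have "homogeneous_part r (multideg r m) f - Poly_Mapping.single \<mu> ?c \<in> ?J"
      using homogeneous_part_mod_I2[OF r(1), of \<mu> f] \<mu>(1) I2_J by auto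
    ultimately show ?thesis
      using ideal_gen_add by fastforce
  qed
qed

lemma Inter_I_l_subset_ideal_gen:
  assumes "0 < length r" "r \<in> box r"
  shows "(\<Inter>l\<in>{0..<length r}. I_l r l) \<subseteq> (ideal_gen (minors2 (box r) \<union> {Var r}) :: 'k::comm_ring_1 mpoly set)"
proof
  fix f :: "'k mpoly"
  assume "f \<in> (\<Inter>l\<in>{0..<length r}. I_l r l)"
  then have "homogeneous_part r \<gamma> f \<in> ideal_gen (minors2 (box r) \<union> {Var r})"
    if "\<gamma> \<in> multideg r ` Poly_Mapping.keys f" for \<gamma>
    using that homogeneous_part_in_ideal[OF assms, of f] by auto
  then have "(\<Sum>\<gamma>\<in>multideg r ` Poly_Mapping.keys f. homogeneous_part r \<gamma> f)
      \<in> ideal_gen (minors2 (box r) \<union> {Var r})"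
    by (rule ideal_gen_sum)
  then show "f \<in> ideal_gen (minors2 (box r) \<union> {Var r})"
    by (simp flip: sum_homogeneous_parts)
qed

theorem corollary1p1p1:
  fixes r :: "nat list"
  assumes "length r \<ge> 2"
    and "\<forall>j<length r. r ! j > 0"
  shows "(\<Inter>l\<in>{0..<length r}. (I_l r l :: 'k::field mpoly set))
           = ideal_gen (minors2 (box r) \<union> {Var r})"
proof (rule subset_antisym)
  have r: "0 < length r" "r \<in> box r"
    using assms by (auto simp: box_def Suc_le_eq)
  then show "(\<Inter>l\<in>{0..<length r}. I_l r l) \<subseteq> (ideal_gen (minors2 (box r) \<union> {Var r}) :: 'k mpoly set)"
    by (rule Inter_I_l_subset_ideal_gen)
  show "ideal_gen (minors2 (box r) \<union> {Var r}) \<subseteq> (\<Inter>l\<in>{0..<length r}. I_l r l :: 'k mpoly set)"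
    by (rule INT_greatest) (rule ideal_gen_subset_I_l[OF r(2)], simp)
qed

end
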